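(* Let $n\geq 1$ and $d\geq 1$ be integers. Then $d\in A_n$ if and only if $k(n,d)\geq |r(n,d)|+1$.
   Context: A walk is a finite sequence $z_0,z_1,\dots,z_l$ of Gaussian integers with $|z_{j+1}-z_j|=1$ for all $0\le j<l$. For natural numbers $n,d$, $n$ is called $d$-avoidable if there exists a walk $(z_j)$ and indices $r,s$ with $z_r-z_s=n$ such that $z_t-z_u\neq d$ for all indices $t,u$. $A_n$ denotes the set of all $d\in\mathbb{N}$ such that $n$ is not $d$-avoidable. For integers $n$ and $d\ge1$, $k(n,d)$ and $r(n,d)$ are the unique integers with $n=k(n,d)\,d+r(n,d)$ and $r(n,d)\in\left[-\lfloor d/2\rfloor,\ \lceil d/2\rceil-1\right]$. *)

theory Defs
  imports Complex_Main
begin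

definition gaussian_int :: "complex \<Rightarrow> bool" where
  "gaussian_int z \<longleftrightarrow> Re z \<in> \<int> \<and> Im z \<in> \<int>"

definition is_walk :: "complex list \<Rightarrow> bool" where
  "is_walk zs \<longleftrightarrow> zs \<noteq> [] \<and> (\<forall>z\<in>set zs. gaussian_int z) \<and>
     (\<forall>j. Suc j < length zs \<longrightarrow> cmod (zs ! Suc j - zs ! j) = 1)"

definition avoidable :: "nat \<Rightarrow> nat \<Rightarrow> bool" where
  "avoidable n d \<longleftrightarrow>
     (\<exists>zs r s. is_walk zs \<and> r < length zs \<and> s < length zs \<and>
        zs ! r - zs ! s = of_nat n \<and>
        (\<forall>t < length zs. \<forall>u < length zs. zs ! t - zs ! u \<noteq> of_nat d))"

definition A_set :: "nat \<Rightarrow> nat set" where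
  "A_set n = {d. \<not> avoidable n d}"

definition kr_pair :: "int \<Rightarrow> int \<Rightarrow> int \<times> int" where
  "kr_pair n d = (THE p. n = fst p * d + snd p \<and>
      - \<lfloor>real_of_int d / 2\<rfloor> \<le> snd p \<and> snd p \<le> \<lceil>real_of_int d / 2\<rceil> - 1)"

definition k_nd :: "int \<Rightarrow> int \<Rightarrow> int" where "k_nd n d = fst (kr_pair n d)"
definition r_nd :: "int \<Rightarrow> int \<Rightarrow> int" where "r_nd n d = snd (kr_pair n d)"

end

theory Submission
  imports Defs
begin

text \<open>
  Lattice walks with steps in \<int> \<times> \<int> stand for walks of Gaussian integers, and
  d is avoidable for n iff some walk has a horizontal chord of length n but none of
  length d.

  If n = k d + r with k > |r|, call n a forcing length. Suppose a walk has a chord of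
  forcing length C but no chord of length d, and take C minimal, so that no chord
  between its ends has length d or another forcing length. Doubling the walk between
  the ends (inserting the midpoints of its steps) and rolling it onto the cylinder
  (\<int>/2C) \<times> \<int> gives a loop winding once around. A point where this loop meets its
  translate by 2d \<plusminus> 1 comes from a vertex and a horizontal step in one row, i.e.
  from chords of lengths A and A + 1 with 2A + 1 \<equiv> \<plusminus>(2d \<plusminus> 1) mod 2C, and the
  arithmetic of forcing lengths shows that one of them has length d or a smaller
  forcing length. So the loop would be disjoint from its translate, contradicting that
  two loops winding once around the cylinder have intersection number 1, which is
  computed by counting crossings of vertical rays.

  Conversely, if k \<le> |r| the walk running up and down the columns 0, ..., n along a
  sawtooth height profile that drops over every horizontal distance d - 1, d, d + 1,
  with equal heights at both ends, has a chord of length n but none of length d.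
\<close>

lemma div_mod_mult_add:
  fixes N q r :: int
  assumes "0 \<le> r" "r < N"
  shows "(N * q + r) div N = q" and "(N * q + r) mod N = r"
  using assms by (simp_all add: div_add1_eq mod_add_eq[symmetric])

lemma div_diff_pred:
  fixes N a :: int
  assumes "N > 0"
  shows "a div N - (a - 1) div N = (if N dvd a then 1 else 0)"
proof (cases "N dvd a")
  case True
  then obtain q where q: "a = N * q" by blast
  have "(a - 1) div N = (N * (q - 1) + (N - 1)) div N" using q by (simp add: algebra_simps)
  also have "\<dots> = q - 1" by (rule div_mod_mult_add(1)) (use assms in auto)
  finally have "(a - 1) div N = q - 1" .
  thus ?thesis using True q assms by simp
next
  case False
  have "0 < a mod N" using False assms by (simp add: dvd_eq_mod_eq_0 order_le_neq_trans)
  have "(a - 1) div N = (N * (a div N) + (a mod N - 1)) div N" by (simp add: algebra_simps)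
  also have "\<dots> = a div N"
    by (rule div_mod_mult_add(1)) (use \<open>0 < a mod N\<close> pos_mod_bound[OF assms, of a] in auto)
  finally have "(a - 1) div N = a div N" .
  thus ?thesis using False by simp
qed

section \<open>Crossings of lattice walks on a cylinder\<close>

definition adjacent :: "int \<times> int \<Rightarrow> int \<times> int \<Rightarrow> bool" where
  "adjacent p q \<longleftrightarrow>
     (snd p = snd q \<and> \<bar>fst q - fst p\<bar> = 1) \<or> (fst p = fst q \<and> \<bar>snd q - snd p\<bar> = 1)"

definition lattice_walk :: "(int \<times> int) list \<Rightarrow> bool" where
  "lattice_walk vs \<longleftrightarrow> (\<forall>t. Suc t < length vs \<longrightarrow> adjacent (vs ! t) (vs ! Suc t))"

lemma adjacent_cases:
  assumes "adjacent p q"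
  obtains (right) "snd p = snd q" "fst q = fst p + 1"
    | (left) "snd p = snd q" "fst p = fst q + 1"
    | (up) "fst p = fst q" "snd q = snd p + 1"
    | (down) "fst p = fst q" "snd p = snd q + 1"
  using assms unfolding adjacent_def by (auto simp: abs_if split: if_splits)

lemma lattice_walkD: "lattice_walk vs \<Longrightarrow> Suc t < length vs \<Longrightarrow> adjacent (vs ! t) (vs ! Suc t)"
  unfolding lattice_walk_def by blast

text \<open>Step t of vs crosses the vertical lines x + 1/2 + N\<int> with sign +1 rightwards
  and -1 leftwards.\<close>
definition crossing :: "(int \<times> int) list \<Rightarrow> int \<Rightarrow> int \<Rightarrow> nat \<Rightarrow> int" where
  "crossing vs N x t =
    (if snd (vs ! t) = snd (vs ! Suc t) \<and> fst (vs ! Suc t) = fst (vs ! t) + 1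
        \<and> N dvd fst (vs ! t) - x then 1
     else if snd (vs ! t) = snd (vs ! Suc t) \<and> fst (vs ! t) = fst (vs ! Suc t) + 1
        \<and> N dvd fst (vs ! Suc t) - x then -1
     else 0)"

definition crossings_above :: "(int \<times> int) list \<Rightarrow> int \<Rightarrow> int \<Rightarrow> int \<Rightarrow> int" where
  "crossings_above vs N x h =
     (\<Sum>t < length vs - 1. if snd (vs ! t) > h then crossing vs N x t else 0)"

lemma dvd_diff_cong:
  fixes N a x x' :: int
  assumes "N dvd x - x'"
  shows "N dvd a - x \<longleftrightarrow> N dvd a - x'"
proof -
  have "a - x' = (a - x) + (x - x')" by simp
  thus ?thesis using dvd_add_left_iff[OF assms, of "a - x"] by simp
qed

lemma crossing_periodic: "N dvd x - x' \<Longrightarrow> crossing vs N x t = crossing vs N x' t"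
  unfolding crossing_def using dvd_diff_cong by simp

lemma crossings_above_periodic:
  assumes "N dvd x - x'"
  shows "crossings_above vs N x h = crossings_above vs N x' h"
  unfolding crossings_above_def by (intro sum.cong refl) (simp add: crossing_periodic[OF assms])

lemma crossing_right:
  "snd (vs ! t) = snd (vs ! Suc t) \<Longrightarrow> fst (vs ! Suc t) = fst (vs ! t) + 1 \<Longrightarrow>
   crossing vs N x t = (if N dvd fst (vs ! t) - x then 1 else 0)"
  unfolding crossing_def by simp

lemma crossing_left:
  "snd (vs ! t) = snd (vs ! Suc t) \<Longrightarrow> fst (vs ! t) = fst (vs ! Suc t) + 1 \<Longrightarrow>
   crossing vs N x t = (if N dvd fst (vs ! Suc t) - x then -1 else 0)"
  unfolding crossing_def by simp

lemma crossing_vertical: "snd (vs ! t) \<noteq> snd (vs ! Suc t) \<Longrightarrow> crossing vs N x t = 0"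
  unfolding crossing_def by simp

lemma crossing_nonzero_vertex:
  assumes "crossing vs N x t \<noteq> 0" "Suc t < length vs"
  obtains u where "u \<in> set vs" "N dvd fst u - x" "snd u = snd (vs ! t)"
proof (cases "snd (vs ! t) = snd (vs ! Suc t) \<and> fst (vs ! Suc t) = fst (vs ! t) + 1
    \<and> N dvd fst (vs ! t) - x")
  case True
  with assms(2) that[of "vs ! t"] show ?thesis by auto
next
  case False
  hence "snd (vs ! t) = snd (vs ! Suc t) \<and> N dvd fst (vs ! Suc t) - x"
    using assms(1) unfolding crossing_def by (auto split: if_splits)
  with assms(2) that[of "vs ! Suc t"] show ?thesis by auto
qed

text \<open>The crossings telescope: step t changes (fst - x - 1) div N by exactly
  crossing vs N x t.\<close>
lemma sum_crossing_eq_winding: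
  assumes "N > 0" "lattice_walk vs" "vs \<noteq> []" "fst (last vs) = fst (hd vs) + e * N"
  shows "(\<Sum>t < length vs - 1. crossing vs N x t) = e"
proof -
  define F where "F X = (X - x - 1) div N" for X
  have step: "crossing vs N x t = F (fst (vs ! Suc t)) - F (fst (vs ! t))"
    if "t < length vs - 1" for t
  proof -
    have "adjacent (vs ! t) (vs ! Suc t)" using assms(2) that by (simp add: lattice_walkD)
    thus ?thesis
    proof (cases rule: adjacent_cases)
      case right
      thus ?thesis using div_diff_pred[OF assms(1), of "fst (vs ! t) - x"]
        unfolding F_def crossing_right[OF right] by simp
    next
      case left
      have "F (fst (vs ! t)) - F (fst (vs ! Suc t)) = (if N dvd fst (vs ! Suc t) - x then 1 else 0)"
        using div_diff_pred[OF assms(1), of "fst (vs ! Suc t) - x"] left unfolding F_def by simp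
      thus ?thesis unfolding crossing_left[OF left] by (cases "N dvd fst (vs ! Suc t) - x") auto
    qed (simp_all add: crossing_vertical)
  qed
  have "(\<Sum>t < length vs - 1. crossing vs N x t)
      = (\<Sum>t < length vs - 1. F (fst (vs ! Suc t)) - F (fst (vs ! t)))"
    using step by simp
  also have "\<dots> = F (fst (vs ! (length vs - 1))) - F (fst (vs ! 0))"
    by (rule sum_lessThan_telescope)
  also have "\<dots> = F (fst (hd vs) + e * N) - F (fst (hd vs))"
    using assms(3,4) by (simp add: last_conv_nth hd_conv_nth)
  also have "\<dots> = e"
  proof -
    have "fst (hd vs) + e * N - x - 1 = (fst (hd vs) - x - 1) + e * N" by simp
    thus ?thesis using assms(1) unfolding F_def by (metis div_mult_self1 less_irrefl add_diff_cancel_right')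
  qed
  finally show ?thesis .
qed

definition disjoint_from_translate :: "(int \<times> int) list \<Rightarrow> int \<Rightarrow> int \<Rightarrow> bool" where
  "disjoint_from_translate vs N s \<longleftrightarrow>
     (\<forall>u\<in>set vs. \<forall>v\<in>set vs. snd u = snd v \<longrightarrow> \<not> N dvd fst v - fst u - s)"

lemma disjoint_from_translate_uminus:
  "disjoint_from_translate vs N s \<Longrightarrow> disjoint_from_translate vs N (- s)"
  unfolding disjoint_from_translate_def
  by (metis dvd_diff_commute diff_minus_eq_add diff_diff_eq2 add.commute)

lemma crossings_above_up:
  assumes "\<forall>v\<in>set vs. snd v = Y + 1 \<longrightarrow> \<not> N dvd fst v - X"
  shows "crossings_above vs N X Y = crossings_above vs N X (Y + 1)"
  unfolding crossings_above_def
proof (intro sum.cong refl)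
  fix t assume "t \<in> {..<length vs - 1}"
  hence t: "Suc t < length vs" by simp
  show "(if snd (vs ! t) > Y then crossing vs N X t else 0)
      = (if snd (vs ! t) > Y + 1 then crossing vs N X t else 0)"
  proof (cases "snd (vs ! t) = Y + 1")
    case True
    have "crossing vs N X t = 0"
    proof (rule ccontr)
      assume "crossing vs N X t \<noteq> 0"
      then obtain u where "u \<in> set vs" "N dvd fst u - X" "snd u = snd (vs ! t)"
        using t by (rule crossing_nonzero_vertex)
      thus False using assms True by auto
    qed
    thus ?thesis by simp
  qed auto
qed

text \<open>The difference of the two counts telescopes along the walk, which closes up
  modulo N.\<close>
lemma crossings_above_right:
  assumes walk: "lattice_walk vs" "vs \<noteq> []"
    and closed: "snd (last vs) = snd (hd vs)" "N dvd fst (last vs) - fst (hd vs)"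
    and free: "\<forall>v\<in>set vs. snd v = Y \<longrightarrow> \<not> N dvd fst v - (X + 1)"
  shows "crossings_above vs N X Y = crossings_above vs N (X + 1) Y"
proof -
  define \<phi> where "\<phi> v = (if snd v > Y \<and> N dvd fst v - (X + 1) then 1 else 0 :: int)" for v
  have step: "(if snd (vs ! t) > Y then crossing vs N X t else 0)
      - (if snd (vs ! t) > Y then crossing vs N (X + 1) t else 0)
      = \<phi> (vs ! Suc t) - \<phi> (vs ! t)" if "t < length vs - 1" for t
  proof -
    have t: "Suc t < length vs" using that by simp
    hence mem: "vs ! t \<in> set vs" "vs ! Suc t \<in> set vs" by auto
    have "adjacent (vs ! t) (vs ! Suc t)" using walk(1) t by (rule lattice_walkD)
    thus ?thesis
    proof (cases rule: adjacent_cases)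
      case right
      have e: "fst (vs ! Suc t) - (X + 1) = fst (vs ! t) - X" using right by simp
      show ?thesis unfolding crossing_right[OF right] \<phi>_def e using right(1) by simp
    next
      case left
      have e: "fst (vs ! t) - (X + 1) = fst (vs ! Suc t) - X" using left by simp
      show ?thesis unfolding crossing_left[OF left] \<phi>_def e using left(1) by simp
    next
      case up
      have "\<phi> (vs ! Suc t) = \<phi> (vs ! t)" using free mem up unfolding \<phi>_def by auto
      thus ?thesis using up by (simp add: crossing_vertical)
    next
      case down
      have "\<phi> (vs ! Suc t) = \<phi> (vs ! t)" using free mem down unfolding \<phi>_def by auto
      thus ?thesis using down by (simp add: crossing_vertical)
    qed
  qed
  have "crossings_above vs N X Y - crossings_above vs N (X + 1) Y
      = (\<Sum>t < length vs - 1. \<phi> (vs ! Suc t) - \<phi> (vs ! t))"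
    unfolding crossings_above_def sum_subtractf[symmetric] using step by simp
  also have "\<dots> = \<phi> (vs ! (length vs - 1)) - \<phi> (vs ! 0)"
    by (rule sum_lessThan_telescope)
  also have "\<dots> = \<phi> (last vs) - \<phi> (hd vs)"
    using walk(2) by (simp add: last_conv_nth hd_conv_nth)
  also have "\<phi> (last vs) = \<phi> (hd vs)"
    using closed dvd_diff_cong[of N "fst (last vs)" "fst (hd vs)"] unfolding \<phi>_def
    by (metis diff_diff_eq2 diff_add_cancel dvd_add_right_iff)
  finally show ?thesis by simp
qed

lemma crossings_above_translate_step:
  assumes walk: "lattice_walk vs" "vs \<noteq> []"
    and closed: "snd (last vs) = snd (hd vs)" "N dvd fst (last vs) - fst (hd vs)"
    and disj: "disjoint_from_translate vs N s" and t: "Suc t < length vs"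
  shows "crossings_above vs N (fst (vs ! t) + s) (snd (vs ! t))
       = crossings_above vs N (fst (vs ! Suc t) + s) (snd (vs ! Suc t))"
proof -
  have mem: "vs ! t \<in> set vs" "vs ! Suc t \<in> set vs" using t by auto
  have D: "\<not> N dvd fst v - fst u - s" if "u \<in> set vs" "v \<in> set vs" "snd u = snd v" for u v
    using disj that unfolding disjoint_from_translate_def by blast
  have "adjacent (vs ! t) (vs ! Suc t)" using walk(1) t by (rule lattice_walkD)
  thus ?thesis
  proof (cases rule: adjacent_cases)
    case right
    have "\<forall>v\<in>set vs. snd v = snd (vs ! t) \<longrightarrow> \<not> N dvd fst v - (fst (vs ! t) + s + 1)"
      using D[OF mem(2)] right by (auto simp: algebra_simps)
    from crossings_above_right[OF walk closed this] show ?thesis using right by (simp add: algebra_simps)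
  next
    case left
    have "\<forall>v\<in>set vs. snd v = snd (vs ! t) \<longrightarrow> \<not> N dvd fst v - (fst (vs ! Suc t) + s + 1)"
      using D[OF mem(1)] left by (auto simp: algebra_simps)
    from crossings_above_right[OF walk closed this] show ?thesis using left by (simp add: algebra_simps)
  next
    case up
    have "\<forall>v\<in>set vs. snd v = snd (vs ! t) + 1 \<longrightarrow> \<not> N dvd fst v - (fst (vs ! t) + s)"
      using D[OF mem(2)] up by (auto simp: algebra_simps)
    from crossings_above_up[OF this] show ?thesis using up by simp
  next
    case down
    have "\<forall>v\<in>set vs. snd v = snd (vs ! Suc t) + 1 \<longrightarrow> \<not> N dvd fst v - (fst (vs ! t) + s)"
      using D[OF mem(1)] down by (auto simp: algebra_simps)
    from crossings_above_up[OF this] show ?thesis using down by simp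
  qed
qed

lemma crossings_above_top:
  assumes "\<forall>v\<in>set vs. snd v \<le> H"
  shows "crossings_above vs N X H = 0"
  unfolding crossings_above_def
proof (intro sum.neutral ballI)
  fix t assume "t \<in> {..<length vs - 1}"
  hence "vs ! t \<in> set vs" by simp
  thus "(if snd (vs ! t) > H then crossing vs N X t else 0) = 0" using assms by auto
qed

text \<open>The count is constant along the walk, and vanishes at its highest vertex.\<close>
lemma crossings_above_translate_eq_0:
  assumes walk: "lattice_walk vs" "vs \<noteq> []"
    and closed: "snd (last vs) = snd (hd vs)" "N dvd fst (last vs) - fst (hd vs)"
    and disj: "disjoint_from_translate vs N s" and u: "u \<in> set vs"
  shows "crossings_above vs N (fst u + s) (snd u) = 0"
proof -
  have const: "crossings_above vs N (fst (vs ! t) + s) (snd (vs ! t))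
      = crossings_above vs N (fst (vs ! 0) + s) (snd (vs ! 0))" if "t < length vs" for t
    using that
  proof (induction t)
    case (Suc t)
    thus ?case using crossings_above_translate_step[OF walk closed disj, of t] by simp
  qed simp
  have fin: "finite (snd ` set vs)" "snd ` set vs \<noteq> {}" using walk(2) by auto
  obtain p where p: "p \<in> set vs" "snd p = Max (snd ` set vs)"
    using Max_in[OF fin] by auto
  have top: "\<forall>v\<in>set vs. snd v \<le> snd p" using fin p(2) by simp
  obtain t0 where "t0 < length vs" "vs ! t0 = p" using p(1) by (auto simp: in_set_conv_nth)
  moreover obtain t1 where "t1 < length vs" "vs ! t1 = u" using u by (auto simp: in_set_conv_nth)
  ultimately have "crossings_above vs N (fst u + s) (snd u) = crossings_above vs N (fst p + s) (snd p)"
    using const by metis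
  thus ?thesis using crossings_above_top[OF top] by simp
qed

lemma sum_crossing_mult_crossings_above_eq_0:
  assumes walk: "lattice_walk vs" "vs \<noteq> []"
    and closed: "snd (last vs) = snd (hd vs)" "N dvd fst (last vs) - fst (hd vs)"
    and disj: "disjoint_from_translate vs N s"
  shows "(\<Sum>t < length vs - 1. crossing vs N x t * crossings_above vs N (x + s) (snd (vs ! t))) = 0"
proof (intro sum.neutral ballI)
  fix t assume "t \<in> {..<length vs - 1}"
  hence t: "Suc t < length vs" by simp
  show "crossing vs N x t * crossings_above vs N (x + s) (snd (vs ! t)) = 0"
  proof (cases "crossing vs N x t = 0")
    case False
    then obtain u where u: "u \<in> set vs" "N dvd fst u - x" "snd u = snd (vs ! t)"
      using t by (rule crossing_nonzero_vertex)
    have "N dvd (x + s) - (fst u + s)" using u(2) by (simp add: dvd_diff_commute)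
    hence "crossings_above vs N (x + s) (snd (vs ! t)) = crossings_above vs N (fst u + s) (snd u)"
      using u(3) by (simp add: crossings_above_periodic)
    thus ?thesis using crossings_above_translate_eq_0[OF walk closed disj u(1)] by simp
  qed simp
qed

lemma crossing_rows_distinct:
  assumes disj: "disjoint_from_translate vs N s"
    and t: "Suc t < length vs" "crossing vs N (- s) t \<noteq> 0"
    and t': "Suc t' < length vs" "crossing vs N 0 t' \<noteq> 0"
  shows "snd (vs ! t) \<noteq> snd (vs ! t')"
proof
  assume row: "snd (vs ! t) = snd (vs ! t')"
  obtain u v where u: "u \<in> set vs" "N dvd fst u - (- s)" "snd u = snd (vs ! t)"
    and v: "v \<in> set vs" "N dvd fst v - 0" "snd v = snd (vs ! t')"
    using t t' by (metis crossing_nonzero_vertex)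
  have "N dvd fst v - fst u - s" using dvd_diff[OF v(2) u(2)] by (simp add: algebra_simps)
  thus False using disj u v row unfolding disjoint_from_translate_def by auto
qed

lemma sum_product_split_by_order:
  fixes a c :: "'i \<Rightarrow> 'a::comm_ring_1" and y :: "'i \<Rightarrow> 'b::linorder"
  assumes "finite I" and "\<And>t t'. t \<in> I \<Longrightarrow> t' \<in> I \<Longrightarrow> a t \<noteq> 0 \<Longrightarrow> c t' \<noteq> 0 \<Longrightarrow> y t \<noteq> y t'"
  shows "(\<Sum>t\<in>I. a t * (\<Sum>t'\<in>I. if y t' > y t then c t' else 0))
       + (\<Sum>t'\<in>I. c t' * (\<Sum>t\<in>I. if y t > y t' then a t else 0))
       = (\<Sum>t\<in>I. a t) * (\<Sum>t\<in>I. c t)"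
proof -
  have "(\<Sum>t\<in>I. a t * (\<Sum>t'\<in>I. if y t' > y t then c t' else 0))
      = (\<Sum>t\<in>I. \<Sum>t'\<in>I. if y t' > y t then a t * c t' else 0)"
    by (auto simp: sum_distrib_left intro!: sum.cong)
  moreover have "(\<Sum>t'\<in>I. c t' * (\<Sum>t\<in>I. if y t > y t' then a t else 0))
      = (\<Sum>t\<in>I. \<Sum>t'\<in>I. if y t > y t' then a t * c t' else 0)"
    by (subst sum.swap) (auto simp: sum_distrib_left mult.commute intro!: sum.cong)
  moreover have "(if y t' > y t then a t * c t' else 0) + (if y t > y t' then a t * c t' else 0)
      = a t * c t'" if "t \<in> I" "t' \<in> I" for t t'
  proof (cases "y t = y t'")
    case True
    hence "a t = 0 \<or> c t' = 0" using assms(2)[OF that] by blast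
    thus ?thesis using True by auto
  qed auto
  ultimately show ?thesis
    by (simp add: sum.distrib[symmetric] sum_product)
qed

text \<open>The intersection number of the loop with its translate by s is
  computed twice by counting crossings of upward vertical rays: it equals
  e * e = 1 for winding number e, while disjointness makes every ray from the loop
  to its translate cross nothing.\<close>
theorem loop_meets_translate:
  assumes walk: "lattice_walk vs" "vs \<noteq> []" and N: "N > 0"
    and loop: "last vs = (fst (hd vs) + e * N, snd (hd vs))" and e: "e = 1 \<or> e = -1"
  shows "\<not> disjoint_from_translate vs N s"
proof
  assume disj: "disjoint_from_translate vs N s"
  have closed: "snd (last vs) = snd (hd vs)" "N dvd fst (last vs) - fst (hd vs)" using loop by auto
  define I where "I = {..<length vs - 1}"
  define a where "a t = crossing vs N (- s) t" for t
  define c where "c t = crossing vs N 0 t" for t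
  define y where "y t = snd (vs ! t)" for t
  have above: "crossings_above vs N x h = (\<Sum>t'\<in>I. if y t' > h then crossing vs N x t' else 0)" for x h
    unfolding crossings_above_def I_def y_def ..
  have "(\<Sum>t\<in>I. a t * crossings_above vs N 0 (y t)) = 0"
    using sum_crossing_mult_crossings_above_eq_0[OF walk closed disj, of "- s"]
    unfolding a_def y_def I_def by simp
  moreover have "(\<Sum>t\<in>I. c t * crossings_above vs N (- s) (y t)) = 0"
    using sum_crossing_mult_crossings_above_eq_0[OF walk closed disjoint_from_translate_uminus[OF disj], of 0]
    unfolding c_def y_def I_def by simp
  ultimately have "(\<Sum>t\<in>I. a t * (\<Sum>t'\<in>I. if y t' > y t then c t' else 0))
      + (\<Sum>t'\<in>I. c t' * (\<Sum>t\<in>I. if y t > y t' then a t else 0)) = 0"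
    unfolding above a_def c_def by simp
  moreover have "y t \<noteq> y t'" if "t \<in> I" "t' \<in> I" "a t \<noteq> 0" "c t' \<noteq> 0" for t t'
    using crossing_rows_distinct[OF disj] that unfolding I_def a_def c_def y_def by simp
  ultimately have "(\<Sum>t\<in>I. a t) * (\<Sum>t\<in>I. c t) = 0"
    using sum_product_split_by_order[of I a c y] unfolding I_def by simp
  moreover have "(\<Sum>t\<in>I. a t) = e" "(\<Sum>t\<in>I. c t) = e"
    unfolding a_def c_def I_def using sum_crossing_eq_winding[OF N walk] loop by simp_all
  ultimately show False using e by auto
qed

section \<open>Forcing lengths\<close>

definition forcing_length :: "int \<Rightarrow> int \<Rightarrow> bool" where
  "forcing_length d L \<longleftrightarrow> (\<exists>k \<ge> 1. \<bar>\<bar>L\<bar> - k * d\<bar> < k)"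

definition excluded_length :: "int \<Rightarrow> int \<Rightarrow> int \<Rightarrow> bool" where
  "excluded_length d C L \<longleftrightarrow> \<bar>L\<bar> = d \<or> (forcing_length d L \<and> \<bar>L\<bar> \<noteq> C)"

lemma forcing_length_uminus [simp]: "forcing_length d (- L) = forcing_length d L"
  unfolding forcing_length_def by simp

lemma excluded_length_uminus [simp]: "excluded_length d C (- L) = excluded_length d C L"
  unfolding excluded_length_def by simp

lemma forcing_lengthI: "k \<ge> 1 \<Longrightarrow> \<bar>\<bar>L\<bar> - k * d\<bar> < k \<Longrightarrow> forcing_length d L"
  unfolding forcing_length_def by blast

lemma not_forcing_length_0: "d \<ge> 1 \<Longrightarrow> \<not> forcing_length d 0"
  unfolding forcing_length_def by (auto simp: mult_le_cancel_left1 dest: mult_left_mono[of 1 d])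

text \<open>For d = 1 every C is C \<cdot> d + 0; the assumption d_one fixes this representation.\<close>
locale forcing_chord =
  fixes d C k r :: int
  assumes d: "d \<ge> 1" and k: "k \<ge> 1" and C: "C = k * d + r" and r: "\<bar>r\<bar> < k"
    and C_neq_d: "C \<noteq> d" and d_one: "d = 1 \<Longrightarrow> r = 0"
begin

lemma d_less_C: "d < C"
proof -
  have "(k - 1) * (d - 1) \<ge> 0" using k d by simp
  hence "k * d \<ge> k + d - 1" by (simp add: algebra_simps)
  thus ?thesis using C r C_neq_d by linarith
qed

lemma excluded_d_plus_pos:
  assumes m: "m \<ge> 1"
  shows "excluded_length d C (d + C * m)"
proof -
  have Cm: "C * m \<ge> C" using mult_left_mono[of 1 m C] m d_less_C d by simp
  hence pos: "d + C * m > 0" using d d_less_C by linarith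
  have e: "\<bar>d + C * m\<bar> - (m * k + 1) * d = m * r" using pos C by (simp add: algebra_simps)
  have "\<bar>m * r\<bar> \<le> m * (k - 1)" using m r by (simp add: abs_mult mult_left_mono)
  also have "\<dots> < m * k + 1" using m by (simp add: algebra_simps)
  finally have "forcing_length d (d + C * m)"
    using e m k by (intro forcing_lengthI[of "m * k + 1"]) (auto simp: mult_pos_pos)
  moreover have "\<bar>d + C * m\<bar> \<noteq> C" using Cm pos d by simp
  ultimately show ?thesis unfolding excluded_length_def by simp
qed

lemma excluded_d_minus:
  assumes m: "m \<ge> 2"
  shows "excluded_length d C (d - C * m)"
proof -
  have Cm: "C * m \<ge> C * 2" using mult_left_mono[of 2 m C] m d_less_C d by simp
  hence neg: "d - C * m < 0" using d_less_C d by linarith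
  have e: "\<bar>d - C * m\<bar> - (m * k - 1) * d = m * r" using neg C by (simp add: algebra_simps)
  have "\<bar>m * r\<bar> \<le> m * (k - 1)" using m r by (simp add: abs_mult mult_left_mono)
  also have "\<dots> < m * k - 1" using m by (simp add: algebra_simps)
  finally have "\<bar>\<bar>d - C * m\<bar> - (m * k - 1) * d\<bar> < m * k - 1" using e by simp
  moreover have "m * k \<ge> 2" using mult_mono[of 2 m 1 k] m k by simp
  ultimately have "forcing_length d (d - C * m)" by (intro forcing_lengthI) auto
  moreover have "\<bar>d - C * m\<bar> \<noteq> C"
  proof (cases "m = 2")
    case False
    hence "C * m \<ge> C * 3" using mult_left_mono[of 3 m C] m d_less_C d by simp
    hence "\<bar>d - C * m\<bar> > C" using neg d_less_C d by linarith
    thus ?thesis by simp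
  qed (use neg C_neq_d in simp)
  ultimately show ?thesis unfolding excluded_length_def by simp
qed

lemma excluded_d_plus_multiple:
  assumes "m \<noteq> -1"
  shows "excluded_length d C (d + C * m)"
proof -
  consider "m = 0" | "m \<ge> 1" | "m \<le> -2" using assms by linarith
  thus ?thesis
  proof cases
    case 1 thus ?thesis unfolding excluded_length_def using d by simp
  next
    case 2 thus ?thesis by (rule excluded_d_plus_pos)
  next
    case 3 thus ?thesis using excluded_d_minus[of "- m"] by simp
  qed
qed

lemma excluded_pair_plus:
  assumes "r \<ge> 1"
  shows "excluded_length d C (d + C * m) \<or> excluded_length d C (d + C * m + 1)"
proof (cases "m = -1")
  case True
  have "\<bar>d + C * m + 1\<bar> = C - d - 1" using True d_less_C by simp
  hence "\<bar>d + C * m + 1\<bar> - (k - 1) * d = r - 1" using C by (simp add: algebra_simps)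
  hence "forcing_length d (d + C * m + 1)" using r assms by (intro forcing_lengthI[of "k - 1"]) auto
  moreover have "\<bar>d + C * m + 1\<bar> \<noteq> C" using True d_less_C d by simp
  ultimately show ?thesis unfolding excluded_length_def by simp
qed (simp add: excluded_d_plus_multiple)

lemma excluded_pair_minus:
  assumes "r \<le> 0"
  shows "excluded_length d C (d + C * m - 1) \<or> excluded_length d C (d + C * m)"
proof (cases "m = -1")
  case m: True
  show ?thesis
  proof (cases "r = 0")
    case True
    have "k \<ge> 2" using C_neq_d C True k by (cases "k = 1") auto
    moreover have "\<bar>d + C * m\<bar> - (k - 1) * d = r" using m d_less_C C by (simp add: algebra_simps)
    ultimately have "forcing_length d (d + C * m)" using True by (intro forcing_lengthI[of "k - 1"]) auto
    moreover have "\<bar>d + C * m\<bar> \<noteq> C" using m d_less_C d by simp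
    ultimately show ?thesis unfolding excluded_length_def by simp
  next
    case False
    hence "d \<ge> 2" using d d_one by force
    have "\<bar>d + C * m - 1\<bar> - (k - 1) * d = r + 1" using m d_less_C C by (simp add: algebra_simps)
    hence "forcing_length d (d + C * m - 1)" using r assms False
      by (intro forcing_lengthI[of "k - 1"]) auto
    moreover have "\<bar>d + C * m - 1\<bar> \<noteq> C" using m d_less_C \<open>d \<ge> 2\<close> by simp
    ultimately show ?thesis unfolding excluded_length_def by simp
  qed
qed (simp add: excluded_d_plus_multiple)

text \<open>The translate by s = 2 d \<plusminus> 1 on the cylinder of the doubled walk meets the
  midpoint between two vertices of one row at distances A and A + 1.\<close>
lemma excluded_pair_of_dvd:
  assumes s: "s = (if r \<ge> 1 then 2 * d + 1 else 2 * d - 1)"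
    and dvd: "2 * C dvd 2 * A + 1 - s \<or> 2 * C dvd 2 * A + 1 + s"
  shows "excluded_length d C A \<or> excluded_length d C (A + 1)"
proof -
  have pair: "excluded_length d C B \<or> excluded_length d C (B + 1)" if B: "2 * C dvd 2 * B + 1 - s" for B
  proof -
    obtain m where m: "2 * B + 1 - s = 2 * C * m" using B by (rule dvdE)
    show ?thesis
    proof (cases "r \<ge> 1")
      case True
      hence "B = d + C * m" using m s by (simp add: algebra_simps)
      thus ?thesis using excluded_pair_plus[OF True, of m] by simp
    next
      case False
      hence "B = d + C * m - 1" using m s by (simp add: algebra_simps)
      thus ?thesis using excluded_pair_minus[of m] False by simp
    qed
  qed
  from dvd show ?thesis
  proof
    assume "2 * C dvd 2 * A + 1 + s"
    moreover have "2 * (- A - 1) + 1 - s = - (2 * A + 1 + s)" by simp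
    ultimately have "2 * C dvd 2 * (- A - 1) + 1 - s" by (simp only: dvd_minus_iff)
    from pair[OF this] show ?thesis
      using excluded_length_uminus[of d C "A + 1"] excluded_length_uminus[of d C A] by auto
  qed (rule pair)
qed

end

section \<open>Doubling a walk\<close>

definition double :: "int \<times> int \<Rightarrow> int \<times> int" where
  "double p = (2 * fst p, 2 * snd p)"

definition double_midpoint :: "int \<times> int \<Rightarrow> int \<times> int \<Rightarrow> int \<times> int" where
  "double_midpoint p q = (fst p + fst q, snd p + snd q)"

definition doubled_walk :: "(int \<times> int) list \<Rightarrow> nat \<Rightarrow> nat \<Rightarrow> (int \<times> int) list" where
  "doubled_walk ws i j = map (\<lambda>m. if even m then double (ws ! (i + m div 2))
       else double_midpoint (ws ! (i + m div 2)) (ws ! (i + m div 2 + 1))) [0..<2 * (j - i) + 1]"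

lemma length_doubled_walk: "length (doubled_walk ws i j) = 2 * (j - i) + 1"
  unfolding doubled_walk_def by simp

lemma nth_doubled_walk:
  "m < 2 * (j - i) + 1 \<Longrightarrow> doubled_walk ws i j ! m =
     (if even m then double (ws ! (i + m div 2))
      else double_midpoint (ws ! (i + m div 2)) (ws ! (i + m div 2 + 1)))"
  unfolding doubled_walk_def by (simp del: upt_Suc)

lemma doubled_walk_not_Nil: "doubled_walk ws i j \<noteq> []"
  using length_doubled_walk[of ws i j] by auto

lemma hd_doubled_walk: "hd (doubled_walk ws i j) = double (ws ! i)"
  using doubled_walk_not_Nil[of ws i j] by (simp add: hd_conv_nth nth_doubled_walk)

lemma last_doubled_walk: "i \<le> j \<Longrightarrow> last (doubled_walk ws i j) = double (ws ! j)"
  using doubled_walk_not_Nil[of ws i j] by (simp add: last_conv_nth length_doubled_walk nth_doubled_walk)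

lemma lattice_walk_doubled_walk:
  assumes walk: "lattice_walk ws" and ij: "i \<le> j" "j < length ws"
  shows "lattice_walk (doubled_walk ws i j)"
  unfolding lattice_walk_def length_doubled_walk
proof (intro allI impI)
  fix m assume m: "Suc m < 2 * (j - i) + 1"
  define a where "a = i + m div 2"
  have adj: "adjacent (ws ! a) (ws ! Suc a)" using walk m ij unfolding a_def by (intro lattice_walkD) auto
  show "adjacent (doubled_walk ws i j ! m) (doubled_walk ws i j ! Suc m)"
  proof (cases "even m")
    case True
    thus ?thesis using m adj unfolding a_def
      by (auto simp: nth_doubled_walk adjacent_def double_def double_midpoint_def algebra_simps)
  next
    case False
    hence "Suc m div 2 = Suc (m div 2)" by presburger
    thus ?thesis using m adj False unfolding a_def
      by (auto simp: nth_doubled_walk adjacent_def double_def double_midpoint_def algebra_simps)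
  qed
qed

lemma set_doubled_walkE:
  assumes "v \<in> set (doubled_walk ws i j)" and "i \<le> j"
  obtains (vertex) t where "i \<le> t" "t \<le> j" "v = double (ws ! t)"
    | (midpoint) t where "i \<le> t" "t < j" "v = double_midpoint (ws ! t) (ws ! Suc t)"
proof -
  obtain m where m: "m < 2 * (j - i) + 1" "v = doubled_walk ws i j ! m"
    using assms by (auto simp: in_set_conv_nth length_doubled_walk)
  show ?thesis
  proof (cases "even m")
    case True
    moreover have "m div 2 \<le> j - i" using m(1) by presburger
    ultimately show ?thesis using m assms(2) vertex[of "i + m div 2"] by (simp add: nth_doubled_walk)
  next
    case False
    hence "m div 2 < j - i" using m(1) by presburger
    thus ?thesis using m False midpoint[of "i + m div 2"] by (simp add: nth_doubled_walk)
  qed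
qed

lemma odd_double_midpoint: "adjacent p q \<Longrightarrow> odd (fst (double_midpoint p q) + snd (double_midpoint p q))"
  unfolding double_midpoint_def by (erule adjacent_cases; simp; presburger)

lemma adjacent_horizontal_if_even:
  "adjacent p q \<Longrightarrow> even (snd p + snd q) \<Longrightarrow> snd p = snd q \<and> \<bar>fst q - fst p\<bar> = 1"
  unfolding adjacent_def by presburger

text \<open>The midpoint lies in an even row, so q q' is a horizontal step whose ends are at
  distances A and A + 1 from p, with 2 A + 1 = D.\<close>
lemma vertex_meets_translated_midpoint:
  assumes adj: "adjacent q q'"
    and row: "snd (double p) = snd (double_midpoint q q')"
    and dvd: "N dvd D - s \<or> N dvd D + s"
    and D: "D = fst (double_midpoint q q') - fst (double p)"
    and F_pair: "\<And>A. N dvd 2 * A + 1 - s \<or> N dvd 2 * A + 1 + s \<Longrightarrow> F A \<or> F (A + 1)"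
  shows "snd p = snd q \<and> snd p = snd q' \<and> (F (fst q - fst p) \<or> F (fst q' - fst p))"
proof -
  have "snd q + snd q' = 2 * snd p" using row unfolding double_def double_midpoint_def by simp
  hence horiz: "snd q = snd q'" "\<bar>fst q' - fst q\<bar> = 1"
    using adjacent_horizontal_if_even[OF adj] by simp_all
  have D': "D = (fst q - fst p) + (fst q' - fst p)"
    unfolding D double_def double_midpoint_def by simp
  from horiz(2) consider "fst q' = fst q + 1" | "fst q = fst q' + 1" by linarith
  hence "F (fst q - fst p) \<or> F (fst q' - fst p)"
  proof cases
    case 1
    hence "F (fst q - fst p) \<or> F (fst q - fst p + 1)" using dvd D' by (intro F_pair) (simp add: algebra_simps)
    thus ?thesis using 1 by (simp add: algebra_simps)
  next
    case 2
    hence "F (fst q' - fst p) \<or> F (fst q' - fst p + 1)" using dvd D' by (intro F_pair) (simp add: algebra_simps)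
    thus ?thesis using 2 by (auto simp: algebra_simps)
  qed
  thus ?thesis using horiz(1) row unfolding double_def double_midpoint_def by simp
qed

text \<open>On a cylinder of even circumference N, an odd translate can only join a vertex of
  the doubled walk to a midpoint.\<close>
lemma doubled_walk_disjoint_from_translate:
  assumes walk: "lattice_walk ws" and ij: "i \<le> j" "j < length ws"
    and s: "odd s" and N: "even N"
    and no_F: "\<And>t t'. i \<le> t \<Longrightarrow> t \<le> j \<Longrightarrow> i \<le> t' \<Longrightarrow> t' \<le> j \<Longrightarrow>
        snd (ws ! t) = snd (ws ! t') \<Longrightarrow> \<not> F (fst (ws ! t') - fst (ws ! t))"
    and F_pair: "\<And>A. N dvd 2 * A + 1 - s \<or> N dvd 2 * A + 1 + s \<Longrightarrow> F A \<or> F (A + 1)"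
  shows "disjoint_from_translate (doubled_walk ws i j) N s"
proof -
  have adj: "adjacent (ws ! t) (ws ! Suc t)" if "t < j" for t
    using walk ij that by (intro lattice_walkD) auto
  have mixed: False
    if t: "i \<le> t" "t \<le> j" and t': "i \<le> t'" "t' < j"
      and row: "snd (double (ws ! t)) = snd (double_midpoint (ws ! t') (ws ! Suc t'))"
      and dvd: "N dvd D - s \<or> N dvd D + s"
      and D: "D = fst (double_midpoint (ws ! t') (ws ! Suc t')) - fst (double (ws ! t))" for t t' D
    using vertex_meets_translated_midpoint[where F = F, OF adj[OF t'(2)] row dvd D F_pair]
      no_F[OF t t'(1) less_imp_le[OF t'(2)]] no_F[OF t _ Suc_leI[OF t'(2)]] t' by auto
  show ?thesis
    unfolding disjoint_from_translate_def
  proof (intro ballI impI notI)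
    fix u v assume u: "u \<in> set (doubled_walk ws i j)" and v: "v \<in> set (doubled_walk ws i j)"
      and row: "snd u = snd v" and dvd: "N dvd fst v - fst u - s"
    have "even (fst v - fst u - s)" using N dvd by (rule dvd_trans)
    hence odd_diff: "odd (fst v - fst u)" using s by simp
    from u ij(1) show False
    proof (cases rule: set_doubled_walkE)
      case u': (vertex t)
      from v ij(1) show False
      proof (cases rule: set_doubled_walkE)
        case (vertex t')
        thus False using u' odd_diff unfolding double_def by simp
      next
        case (midpoint t')
        show False by (rule mixed[of t t' "fst v - fst u"]) (use u' midpoint row dvd in auto)
      qed
    next
      case u': (midpoint t)
      from v ij(1) show False
      proof (cases rule: set_doubled_walkE)
        case (vertex t')
        have "N dvd fst u - fst v + s" using dvd by (simp add: dvd_diff_commute algebra_simps)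
        show False by (rule mixed[of t' t "fst u - fst v"]) (use u' vertex row \<open>N dvd fst u - fst v + s\<close> in auto)
      next
        case (midpoint t')
        have "odd (fst u + snd u)" "odd (fst v + snd v)"
          using u' midpoint odd_double_midpoint[OF adj[OF u'(2)]] odd_double_midpoint[OF adj[OF midpoint(2)]]
          by simp_all
        thus False using row odd_diff by presburger
      qed
    qed
  qed
qed

section \<open>Forcing lengths force a chord of length d\<close>

definition has_chord :: "(int \<times> int) list \<Rightarrow> int \<Rightarrow> bool" where
  "has_chord ws L \<longleftrightarrow> (\<exists>p\<in>set ws. \<exists>q\<in>set ws. snd p = snd q \<and> fst q - fst p = L)"

text \<open>A chord of forcing length C that is minimal, in the sense that no chord inside it
  has excluded length, cannot exist: the doubled walk between its ends closes up on the
  cylinder (\<int>/2C) \<times> \<int> and would be disjoint from its translate by 2d \<plusminus> 1.\<close>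
lemma minimal_forcing_chord_impossible:
  assumes walk: "lattice_walk ws" and d: "d \<ge> 1" and ij: "i \<le> j" "j < length ws"
    and row: "snd (ws ! i) = snd (ws ! j)"
    and forcing: "forcing_length d (fst (ws ! j) - fst (ws ! i))"
    and not_d: "\<bar>fst (ws ! j) - fst (ws ! i)\<bar> \<noteq> d"
    and minimal: "\<And>t t'. i \<le> t \<Longrightarrow> t \<le> j \<Longrightarrow> i \<le> t' \<Longrightarrow> t' \<le> j \<Longrightarrow>
      snd (ws ! t) = snd (ws ! t') \<Longrightarrow>
      \<not> excluded_length d \<bar>fst (ws ! j) - fst (ws ! i)\<bar> (fst (ws ! t') - fst (ws ! t))"
  shows False
proof -
  define c where "c = fst (ws ! j) - fst (ws ! i)"
  define C where "C = \<bar>c\<bar>"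
  have "c \<noteq> 0" using forcing not_forcing_length_0[OF d] unfolding c_def by auto
  hence C_pos: "C \<ge> 1" unfolding C_def by simp
  obtain k where k: "k \<ge> 1" "\<bar>C - k * d\<bar> < k"
    using forcing unfolding forcing_length_def C_def c_def by blast
  define k' where "k' = (if d = 1 then C else k)"
  define r' where "r' = (if d = 1 then 0 else C - k * d)"
  interpret forcing_chord d C k' r'
    using d k not_d C_pos unfolding c_def[symmetric] C_def[symmetric]
    by unfold_locales (auto simp: k'_def r'_def)
  define s where "s = (if r' \<ge> 1 then 2 * d + 1 else 2 * d - 1)"
  define vs where "vs = doubled_walk ws i j"
  have "disjoint_from_translate vs (2 * C) s"
    unfolding vs_def
  proof (rule doubled_walk_disjoint_from_translate[OF walk ij, where F = "excluded_length d C"])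
    show "odd s" "even (2 * C)" unfolding s_def by simp_all
  qed (use minimal excluded_pair_of_dvd[OF s_def] in \<open>auto simp: C_def c_def\<close>)
  moreover have "last vs = (fst (hd vs) + sgn c * (2 * C), snd (hd vs))"
  proof -
    have "sgn c * (2 * C) = 2 * c" unfolding C_def by (simp add: sgn_mult_abs mult.left_commute)
    thus ?thesis using row unfolding vs_def hd_doubled_walk last_doubled_walk[OF ij(1)] c_def double_def
      by simp
  qed
  moreover have "sgn c = 1 \<or> sgn c = -1" using \<open>c \<noteq> 0\<close> by (simp add: sgn_if)
  ultimately show False
    using loop_meets_translate[of vs "2 * C" "sgn c" s] C_pos unfolding vs_def
    by (simp add: lattice_walk_doubled_walk[OF walk ij] doubled_walk_not_Nil)
qed

theorem lattice_walk_forcing_chord: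
  assumes walk: "lattice_walk ws" and d: "d \<ge> 1"
  shows "i \<le> j \<Longrightarrow> j < length ws \<Longrightarrow> snd (ws ! i) = snd (ws ! j) \<Longrightarrow>
    forcing_length d (fst (ws ! j) - fst (ws ! i)) \<Longrightarrow> has_chord ws d"
proof (induction "j - i" arbitrary: i j rule: less_induct)
  case (less i j)
  show ?case
  proof (rule ccontr)
    assume no_chord: "\<not> has_chord ws d"
    have chord: "has_chord ws d" if "t < length ws" "t' < length ws"
      "snd (ws ! t) = snd (ws ! t')" "\<bar>fst (ws ! t') - fst (ws ! t)\<bar> = d" for t t'
    proof (cases "fst (ws ! t') - fst (ws ! t) = d")
      case True thus ?thesis using that unfolding has_chord_def by (metis nth_mem)
    next
      case False
      hence "fst (ws ! t) - fst (ws ! t') = d" using that(4) by auto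
      thus ?thesis using that unfolding has_chord_def by (metis nth_mem)
    qed
    have shorter: "has_chord ws d" if t: "i \<le> t" "t \<le> j" "i \<le> t'" "t' \<le> j"
      and row: "snd (ws ! t) = snd (ws ! t')" and forcing: "forcing_length d (fst (ws ! t') - fst (ws ! t))"
      and other: "\<bar>fst (ws ! t') - fst (ws ! t)\<bar> \<noteq> \<bar>fst (ws ! j) - fst (ws ! i)\<bar>" for t t'
    proof -
      have "{t, t'} \<noteq> {i, j}" using other by (auto simp: doubleton_eq_iff abs_minus_commute)
      hence "max t t' - min t t' < j - i" using t by (auto simp: doubleton_eq_iff)
      moreover have "forcing_length d (fst (ws ! max t t') - fst (ws ! min t t'))"
        using forcing forcing_length_uminus[of d "fst (ws ! t') - fst (ws ! t)"]
        by (cases "t \<le> t'") (simp_all add: max_def min_def)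
      ultimately show ?thesis
        using less.hyps less.prems(2) t row by (simp add: max_def min_def)
    qed
    show False
    proof (rule minimal_forcing_chord_impossible[OF walk d less.prems])
      show "\<bar>fst (ws ! j) - fst (ws ! i)\<bar> \<noteq> d"
        using chord[of i j] less.prems no_chord by auto
      show "\<not> excluded_length d \<bar>fst (ws ! j) - fst (ws ! i)\<bar> (fst (ws ! t') - fst (ws ! t))"
        if "i \<le> t" "t \<le> j" "i \<le> t'" "t' \<le> j" "snd (ws ! t) = snd (ws ! t')" for t t'
        using that chord[of t t'] shorter[of t t'] less.prems(2) no_chord
        unfolding excluded_length_def by auto
    qed
  qed
qed

corollary has_chord_of_forcing_length:
  assumes "lattice_walk ws" "d \<ge> 1" "p \<in> set ws" "q \<in> set ws" "snd p = snd q"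
    and "forcing_length d (fst q - fst p)"
  shows "has_chord ws d"
proof -
  obtain i j where ij: "i < length ws" "j < length ws" "ws ! i = p" "ws ! j = q"
    using assms(3,4) by (auto simp: in_set_conv_nth)
  show ?thesis
  proof (cases "i \<le> j")
    case True
    thus ?thesis using lattice_walk_forcing_chord[OF assms(1,2) True] ij assms(5,6) by simp
  next
    case False
    have "forcing_length d (fst p - fst q)"
      using assms(6) forcing_length_uminus[of d "fst q - fst p"] by simp
    thus ?thesis using lattice_walk_forcing_chord[OF assms(1,2), of j i] False ij assms(5) by simp
  qed
qed

section \<open>Walks avoiding d\<close>

definition vertical_segment :: "int \<Rightarrow> int \<Rightarrow> int \<Rightarrow> (int \<times> int) list" where
  "vertical_segment x a b = map (Pair x) (if a \<le> b then [a..b] else rev [b..a])"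

lemma vertical_segment_not_Nil: "vertical_segment x a b \<noteq> []"
  unfolding vertical_segment_def by simp

lemma hd_vertical_segment: "hd (vertical_segment x a b) = (x, a)"
  unfolding vertical_segment_def
  by (cases "a \<le> b") (simp_all add: hd_map hd_rev upto_rec1[of a b] upto_rec2[of b a])

lemma last_vertical_segment: "last (vertical_segment x a b) = (x, b)"
  unfolding vertical_segment_def
  by (cases "a \<le> b") (simp_all add: last_map last_rev upto_rec2[of a b] upto_rec1[of b a])

lemma set_vertical_segment: "set (vertical_segment x a b) = Pair x ` {min a b..max a b}"
  unfolding vertical_segment_def by (simp add: min_def max_def)

lemma nth_rev_upto: "k < nat (a - b + 1) \<Longrightarrow> rev [b..a] ! k = a - int k"
  by (simp add: rev_nth nth_upto of_nat_diff)

lemma lattice_walk_vertical_segment: "lattice_walk (vertical_segment x a b)"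
  unfolding lattice_walk_def vertical_segment_def
  by (auto simp: adjacent_def nth_rev_upto)

lemma lattice_walk_append:
  assumes "lattice_walk xs" "lattice_walk ys" "xs \<noteq> []" "ys \<noteq> []" "adjacent (last xs) (hd ys)"
  shows "lattice_walk (xs @ ys)"
  unfolding lattice_walk_def
proof (intro allI impI)
  fix t assume t: "Suc t < length (xs @ ys)"
  consider "Suc t < length xs" | "Suc t = length xs" | "length xs \<le> t" by linarith
  thus "adjacent ((xs @ ys) ! t) ((xs @ ys) ! Suc t)"
  proof cases
    case 1 thus ?thesis using assms(1) by (simp add: nth_append lattice_walkD)
  next
    case 2
    hence "t = length xs - 1" by simp
    thus ?thesis using 2 assms(3-5) by (simp add: nth_append last_conv_nth hd_conv_nth)
  next
    case 3
    hence "Suc t - length xs = Suc (t - length xs)" by simp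
    thus ?thesis using 3 t assms(2) by (simp add: nth_append lattice_walkD)
  qed
qed

fun column_walk :: "(int \<Rightarrow> int) \<Rightarrow> nat \<Rightarrow> (int \<times> int) list" where
  "column_walk h 0 = vertical_segment 0 (h (-1)) (h 0)"
| "column_walk h (Suc k) = column_walk h k @ vertical_segment (int (Suc k)) (h (int k)) (h (int (Suc k)))"

lemma column_walk_not_Nil: "column_walk h k \<noteq> []"
  by (cases k) (simp_all add: vertical_segment_not_Nil)

lemma hd_column_walk: "hd (column_walk h k) = (0, h (-1))"
  by (induction k) (simp_all add: hd_vertical_segment column_walk_not_Nil)

lemma last_column_walk: "last (column_walk h k) = (int k, h (int k))"
  by (cases k) (simp_all add: last_vertical_segment vertical_segment_not_Nil)

lemma lattice_walk_column_walk: "lattice_walk (column_walk h k)"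
proof (induction k)
  case (Suc k)
  show ?case
    using lattice_walk_append[OF Suc.IH lattice_walk_vertical_segment column_walk_not_Nil
        vertical_segment_not_Nil]
    by (simp add: last_column_walk hd_vertical_segment adjacent_def)
qed (simp add: lattice_walk_vertical_segment)

lemma set_column_walk:
  "set (column_walk h k) = {p. 0 \<le> fst p \<and> fst p \<le> int k
     \<and> min (h (fst p - 1)) (h (fst p)) \<le> snd p \<and> snd p \<le> max (h (fst p - 1)) (h (fst p))}"
proof (induction k)
  case 0 show ?case by (auto simp: set_vertical_segment)
next
  case (Suc k)
  show ?case
    unfolding column_walk.simps set_append Suc.IH set_vertical_segment
    by (auto simp: le_less add.commute)
qed

text \<open>Along a height profile dropping strictly over every horizontal distance d, d \<plusminus> 1,
  the column intervals at distance d are disjoint.\<close>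
lemma column_walk_no_chord:
  assumes drop: "\<And>x a b. 0 \<le> x \<Longrightarrow> x + d \<le> int k \<Longrightarrow> a \<in> {x - 1, x} \<Longrightarrow> b \<in> {x + d - 1, x + d} \<Longrightarrow> h b < h a"
  shows "\<not> has_chord (column_walk h k) d"
proof
  assume "has_chord (column_walk h k) d"
  then obtain p q where pq: "p \<in> set (column_walk h k)" "q \<in> set (column_walk h k)"
    and row: "snd p = snd q" and dist: "fst q = fst p + d"
    unfolding has_chord_def by force
  have "0 \<le> fst p" "fst p + d \<le> int k" using pq dist by (auto simp: set_column_walk)
  from drop[OF this] have "h (fst p + d - 1) < h (fst p - 1)" "h (fst p + d - 1) < h (fst p)"
    "h (fst p + d) < h (fst p - 1)" "h (fst p + d) < h (fst p)"
    by auto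
  thus False using pq row dist unfolding set_column_walk by auto
qed

text \<open>A tent over each period of length d with slopes M - 1 and 1 - M, lowered by M
  per period: a shift by d, d + 1 or d - 1 always loses height.\<close>
definition tent :: "int \<Rightarrow> int \<Rightarrow> int \<Rightarrow> int" where
  "tent d M \<rho> = min (\<rho> * (M - 1)) ((d - 1 - \<rho>) * (M - 1) - M)"

definition sawtooth :: "int \<Rightarrow> int \<Rightarrow> int \<Rightarrow> int" where
  "sawtooth d M x = tent d M (x mod d) - x div d * M"

definition profile :: "int \<Rightarrow> int \<Rightarrow> int \<Rightarrow> int \<Rightarrow> int" where
  "profile d M n x = (if x = -1 \<or> x = n then 1 - M else sawtooth d M x)"

lemma sawtooth_eq: "0 \<le> \<rho> \<Longrightarrow> \<rho> < d \<Longrightarrow> sawtooth d M (d * q + \<rho>) = tent d M \<rho> - q * M"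
  unfolding sawtooth_def by (simp add: div_mod_mult_add)

context
  fixes d M :: int
  assumes d: "d \<ge> 3" and M: "M \<ge> 2"
begin

lemma tent_0: "tent d M 0 = 0"
proof -
  have "(d - 1) * (M - 1) \<ge> 2 * (M - 1)" using d M by (intro mult_right_mono) auto
  thus ?thesis unfolding tent_def using M by simp
qed

lemma tent_last: "tent d M (d - 1) = - M"
proof -
  have "(d - 1) * (M - 1) \<ge> 0" using d M by simp
  thus ?thesis unfolding tent_def using M by simp
qed

lemma tent_succ_le: "tent d M (\<rho> + 1) \<le> tent d M \<rho> + (M - 1)"
  unfolding tent_def using M by (simp add: algebra_simps min_def)

lemma tent_pred_le: "tent d M (\<rho> - 1) \<le> tent d M \<rho> + (M - 1)"
  unfolding tent_def using M by (simp add: algebra_simps min_def)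

lemma sawtooth_drop:
  assumes \<delta>: "\<delta> \<in> {d - 1, d, d + 1}"
  shows "sawtooth d M (x + \<delta>) < sawtooth d M x"
proof -
  define q \<rho> where "q = x div d" and "\<rho> = x mod d"
  have x: "x = d * q + \<rho>" and \<rho>: "0 \<le> \<rho>" "\<rho> < d" unfolding q_def \<rho>_def using d by auto
  have at_x: "sawtooth d M x = tent d M \<rho> - q * M" using sawtooth_eq[OF \<rho>] x by simp
  consider "\<delta> = d" | "\<delta> = d + 1" "\<rho> + 1 < d" | "\<delta> = d + 1" "\<rho> = d - 1"
    | "\<delta> = d - 1" "\<rho> \<ge> 1" | "\<delta> = d - 1" "\<rho> = 0"
    using \<delta> \<rho> by fastforce
  thus ?thesis
  proof cases
    case 1
    have e: "x + \<delta> = d * (q + 1) + \<rho>" using 1 x by (simp add: algebra_simps)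
    have "sawtooth d M (x + \<delta>) = tent d M \<rho> - (q + 1) * M"
      unfolding e by (rule sawtooth_eq[OF \<rho>])
    thus ?thesis using at_x M by (simp add: algebra_simps)
  next
    case 2
    have e: "x + \<delta> = d * (q + 1) + (\<rho> + 1)" using 2 x by (simp add: algebra_simps)
    have "sawtooth d M (x + \<delta>) = tent d M (\<rho> + 1) - (q + 1) * M"
      unfolding e by (rule sawtooth_eq) (use 2 \<rho> in auto)
    thus ?thesis using at_x tent_succ_le[of \<rho>] by (simp add: algebra_simps)
  next
    case 3
    have e: "x + \<delta> = d * (q + 2) + 0" using 3 x by (simp add: algebra_simps)
    have "sawtooth d M (x + \<delta>) = tent d M 0 - (q + 2) * M"
      unfolding e by (rule sawtooth_eq) (use d in auto)
    moreover have "tent d M \<rho> = - M" using 3(2) tent_last by simp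
    ultimately show ?thesis using at_x tent_0 M by (simp add: algebra_simps)
  next
    case 4
    have e: "x + \<delta> = d * (q + 1) + (\<rho> - 1)" using 4 x by (simp add: algebra_simps)
    have "sawtooth d M (x + \<delta>) = tent d M (\<rho> - 1) - (q + 1) * M"
      unfolding e by (rule sawtooth_eq) (use 4 \<rho> in auto)
    thus ?thesis using at_x tent_pred_le[of \<rho>] by (simp add: algebra_simps)
  next
    case 5
    have e: "x + \<delta> = d * q + (d - 1)" using 5 x by (simp add: algebra_simps)
    have "sawtooth d M (x + \<delta>) = tent d M (d - 1) - q * M"
      unfolding e by (rule sawtooth_eq) (use d in auto)
    moreover have "tent d M \<rho> = 0" using 5(2) tent_0 by simp
    ultimately show ?thesis using at_x tent_last M by linarith
  qed
qed

text \<open>The endpoints are lifted to the common height 1 - M; the hypotheses keep the drop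
  across them.\<close>
lemma profile_drop:
  assumes n: "n > d" and end1: "sawtooth d M (n - d) \<ge> 2 - M" and end2: "sawtooth d M (n - d - 1) \<ge> 2 - M"
    and x: "0 \<le> x" "x + d \<le> n" and ab: "a \<in> {x - 1, x}" "b \<in> {x + d - 1, x + d}"
  shows "profile d M n b < profile d M n a"
proof -
  have start: "sawtooth d M b = - M" if "b \<in> {d - 1, d}" for b
    using that sawtooth_eq[of "d - 1" d M 0] sawtooth_eq[of 0 d M 1] d tent_0 tent_last by auto
  show ?thesis
  proof (cases "a = -1")
    case True
    hence "b \<in> {d - 1, d}" using ab x by auto
    thus ?thesis using True start n d unfolding profile_def by auto
  next
    case a: False
    show ?thesis
    proof (cases "b = n")
      case True
      hence "a \<in> {n - d - 1, n - d}" using ab x by auto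
      thus ?thesis using True a end1 end2 d unfolding profile_def by auto
    next
      case False
      have "b - a \<in> {d - 1, d, d + 1}" using ab by auto
      from sawtooth_drop[OF this, of a] show ?thesis
        using a False ab x n d unfolding profile_def by auto
    qed
  qed
qed

lemma avoiding_walk_of_sawtooth:
  assumes n: "n > d" and ends: "sawtooth d M (n - d) \<ge> 2 - M" "sawtooth d M (n - d - 1) \<ge> 2 - M"
  shows "\<exists>ws h. lattice_walk ws \<and> (0, h) \<in> set ws \<and> (n, h) \<in> set ws \<and> \<not> has_chord ws d"
proof -
  define ws where "ws = column_walk (profile d M n) (nat n)"
  have "hd ws \<in> set ws" "last ws \<in> set ws" unfolding ws_def using column_walk_not_Nil by simp_all
  moreover have "int (nat n) = n" using n d by simp
  ultimately have "(0, 1 - M) \<in> set ws" "(n, 1 - M) \<in> set ws"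
    unfolding ws_def hd_column_walk last_column_walk by (simp_all add: profile_def)
  moreover have "\<not> has_chord ws d" unfolding ws_def
    by (rule column_walk_no_chord) (use n d profile_drop[OF n ends] in auto)
  ultimately show ?thesis using lattice_walk_column_walk unfolding ws_def by blast
qed

end

lemma avoiding_walk_nonneg_remainder:
  fixes n d k r :: int
  assumes k: "k \<ge> 1" and rk: "k \<le> r" and rd: "2 * r \<le> d - 1" and n: "n = k * d + r"
  shows "\<exists>ws h. lattice_walk ws \<and> (0, h) \<in> set ws \<and> (n, h) \<in> set ws \<and> \<not> has_chord ws d"
proof (rule avoiding_walk_of_sawtooth)
  define M where "M = k + 2"
  show d: "d \<ge> 3" and M: "M \<ge> 2" using k rk rd unfolding M_def by auto
  have "k * d \<ge> 1 * d" using k d by (intro mult_right_mono) auto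
  thus "n > d" using n rk k by linarith
  have r: "0 \<le> r" "r < d" "0 \<le> r - 1" "r - 1 < d" using k rk rd by auto
  have e: "n - d = d * (k - 1) + r" "n - d - 1 = d * (k - 1) + (r - 1)"
    using n by (simp_all add: algebra_simps)
  have saw: "sawtooth d M (n - d) = tent d M r - (k - 1) * M"
    "sawtooth d M (n - d - 1) = tent d M (r - 1) - (k - 1) * M"
     apply (unfold e(1); rule sawtooth_eq; use r in simp)
    apply (unfold e(2); rule sawtooth_eq; use r in simp)
    done
  have "r * (k + 1) \<ge> k * (k + 1)" using mult_right_mono[of k r "k + 1"] rk k by simp
  moreover have "(d - 1 - r) * (k + 1) \<ge> r * (k + 1)" using mult_right_mono[of r "d - 1 - r" "k + 1"] rd k by simp
  ultimately have "tent d M r \<ge> k * (k + 1) - (k + 2)" "tent d M (r - 1) \<ge> k * (k + 1) - (k + 1)"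
    unfolding tent_def M_def using k by (auto simp: algebra_simps min_def)
  moreover have "(k - 1) * M = k * (k + 1) - 2" unfolding M_def by (simp add: algebra_simps)
  ultimately show "sawtooth d M (n - d) \<ge> 2 - M" and "sawtooth d M (n - d - 1) \<ge> 2 - M"
    using saw unfolding M_def by simp_all
qed

lemma avoiding_walk_neg_remainder:
  fixes n d k u :: int
  assumes k: "k \<ge> 2" and uk: "k \<le> u" and ud: "2 * u \<le> d" and n: "n = k * d - u"
  shows "\<exists>ws h. lattice_walk ws \<and> (0, h) \<in> set ws \<and> (n, h) \<in> set ws \<and> \<not> has_chord ws d"
proof (rule avoiding_walk_of_sawtooth)
  define M where "M = k + 2"
  show d: "d \<ge> 3" and M: "M \<ge> 2" using k uk ud unfolding M_def by auto
  have "k * d \<ge> 2 * d" using k d by (intro mult_right_mono) auto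
  thus "n > d" using n uk ud k by linarith
  have u: "0 \<le> d - u" "d - u < d" "0 \<le> d - u - 1" "d - u - 1 < d" using k uk ud by auto
  have e: "n - d = d * (k - 2) + (d - u)" "n - d - 1 = d * (k - 2) + (d - u - 1)"
    using n by (simp_all add: algebra_simps)
  have saw: "sawtooth d M (n - d) = tent d M (d - u) - (k - 2) * M"
    "sawtooth d M (n - d - 1) = tent d M (d - u - 1) - (k - 2) * M"
     apply (unfold e(1); rule sawtooth_eq; use u in simp)
    apply (unfold e(2); rule sawtooth_eq; use u in simp)
    done
  have "u * (k + 1) \<ge> k * (k + 1)" using mult_right_mono[of k u "k + 1"] uk k by simp
  moreover have "(d - u) * (k + 1) \<ge> u * (k + 1)" using mult_right_mono[of u "d - u" "k + 1"] ud k by simp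
  ultimately have "tent d M (d - u) \<ge> k * (k + 1) - (k + 1) - (k + 2)"
    "tent d M (d - u - 1) \<ge> k * (k + 1) - (k + 1) - (k + 2)"
    unfolding tent_def M_def using k by (auto simp: algebra_simps min_def)
  moreover have "(k - 2) * M = k * (k + 1) - k - 4" unfolding M_def by (simp add: algebra_simps)
  ultimately show "sawtooth d M (n - d) \<ge> 2 - M" and "sawtooth d M (n - d - 1) \<ge> 2 - M"
    using saw unfolding M_def by simp_all
qed

section \<open>Gaussian integers\<close>

definition lattice_point :: "complex \<Rightarrow> int \<times> int" where
  "lattice_point z = (\<lfloor>Re z\<rfloor>, \<lfloor>Im z\<rfloor>)"

definition of_lattice :: "int \<times> int \<Rightarrow> complex" where
  "of_lattice p = Complex (of_int (fst p)) (of_int (snd p))"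

lemma gaussian_int_of_lattice: "gaussian_int (of_lattice p)"
  unfolding gaussian_int_def of_lattice_def by simp

lemma of_lattice_lattice_point: "gaussian_int z \<Longrightarrow> of_lattice (lattice_point z) = z"
  unfolding gaussian_int_def lattice_point_def of_lattice_def
  by (auto simp: complex_eq_iff elim!: Ints_cases)

lemma of_lattice_diff_eq_of_int:
  "of_lattice p - of_lattice q = of_int e \<longleftrightarrow> fst p - fst q = e \<and> snd p = snd q"
  unfolding of_lattice_def complex_eq_iff by (simp del: of_int_diff add: of_int_diff[symmetric])

lemma int_sum_squares_eq_1:
  fixes a b :: int
  assumes "a\<^sup>2 + b\<^sup>2 = 1"
  shows "(\<bar>a\<bar> = 1 \<and> b = 0) \<or> (a = 0 \<and> \<bar>b\<bar> = 1)"
proof -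
  have "a = 0 \<or> b = 0"
  proof (rule ccontr)
    assume "\<not> (a = 0 \<or> b = 0)"
    hence "a\<^sup>2 \<ge> 1" "b\<^sup>2 \<ge> 1" by (simp_all add: int_one_le_iff_zero_less)
    thus False using assms by simp
  qed
  thus ?thesis using assms by (auto simp: power2_eq_1_iff)
qed

lemma cmod_of_lattice_diff_eq_1: "cmod (of_lattice q - of_lattice p) = 1 \<longleftrightarrow> adjacent p q"
proof -
  define a b where "a = fst q - fst p" and "b = snd q - snd p"
  have "cmod (of_lattice q - of_lattice p) = sqrt (of_int (a\<^sup>2 + b\<^sup>2))"
    unfolding of_lattice_def cmod_def a_def b_def by simp
  hence "cmod (of_lattice q - of_lattice p) = 1 \<longleftrightarrow> a\<^sup>2 + b\<^sup>2 = 1"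
    by (simp only: real_sqrt_eq_1_iff of_int_eq_1_iff)
  also have "\<dots> \<longleftrightarrow> (\<bar>a\<bar> = 1 \<and> b = 0) \<or> (a = 0 \<and> \<bar>b\<bar> = 1)"
    using int_sum_squares_eq_1[of a b] by (auto simp: abs_if power2_eq_1_iff split: if_splits)
  finally show ?thesis unfolding adjacent_def a_def b_def by auto
qed

lemma is_walk_iff_lattice_walk:
  "is_walk zs \<longleftrightarrow> zs \<noteq> [] \<and> (\<exists>ws. zs = map of_lattice ws \<and> lattice_walk ws)"
proof
  assume walk: "is_walk zs"
  hence "zs = map of_lattice (map lattice_point zs)"
    unfolding is_walk_def by (simp add: map_idI of_lattice_lattice_point)
  moreover have "lattice_walk (map lattice_point zs)"
    using walk unfolding lattice_walk_def
    by (metis calculation is_walk_def cmod_of_lattice_diff_eq_1 length_map nth_map Suc_lessD)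
  ultimately show "zs \<noteq> [] \<and> (\<exists>ws. zs = map of_lattice ws \<and> lattice_walk ws)"
    using walk unfolding is_walk_def by blast
next
  assume "zs \<noteq> [] \<and> (\<exists>ws. zs = map of_lattice ws \<and> lattice_walk ws)"
  thus "is_walk zs"
    unfolding is_walk_def lattice_walk_def
    by (auto simp: gaussian_int_of_lattice cmod_of_lattice_diff_eq_1)
qed

lemma avoidable_iff_lattice_walk:
  "avoidable n d \<longleftrightarrow> (\<exists>ws. lattice_walk ws \<and> \<not> has_chord ws (int d) \<and>
     (\<exists>p\<in>set ws. \<exists>q\<in>set ws. snd p = snd q \<and> fst q - fst p = int n))"
proof -
  have diff: "of_lattice q - of_lattice p = of_nat m \<longleftrightarrow> snd p = snd q \<and> fst q - fst p = int m"
    for p q and m :: nat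
    using of_lattice_diff_eq_of_int[of q p "int m"] by auto
  have "avoidable n d \<longleftrightarrow> (\<exists>ws. lattice_walk ws \<and> ws \<noteq> [] \<and>
      (\<exists>r < length ws. \<exists>s < length ws. of_lattice (ws ! r) - of_lattice (ws ! s) = of_nat n) \<and>
      (\<forall>t < length ws. \<forall>u < length ws. of_lattice (ws ! t) - of_lattice (ws ! u) \<noteq> of_nat d))"
    (is "_ \<longleftrightarrow> (\<exists>ws. ?P ws)")
  proof
    assume "avoidable n d"
    then obtain zs r s ws where "zs = map of_lattice ws" "lattice_walk ws" "zs \<noteq> []"
      "r < length zs" "s < length zs" "zs ! r - zs ! s = of_nat n"
      "\<forall>t < length zs. \<forall>u < length zs. zs ! t - zs ! u \<noteq> of_nat d"
      unfolding avoidable_def is_walk_iff_lattice_walk by blast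
    thus "\<exists>ws. ?P ws" by (intro exI[of _ ws]) auto
  next
    assume "\<exists>ws. ?P ws"
    then obtain ws r s where ws: "lattice_walk ws" "ws \<noteq> []" "r < length ws" "s < length ws"
      "of_lattice (ws ! r) - of_lattice (ws ! s) = of_nat n"
      "\<forall>t < length ws. \<forall>u < length ws. of_lattice (ws ! t) - of_lattice (ws ! u) \<noteq> of_nat d"
      by blast
    show "avoidable n d"
      unfolding avoidable_def is_walk_iff_lattice_walk
      by (rule exI[of _ "map of_lattice ws"], rule exI[of _ r], rule exI[of _ s]) (use ws in auto)
  qed
  also have "\<dots> \<longleftrightarrow> (\<exists>ws. lattice_walk ws \<and> \<not> has_chord ws (int d) \<and>
     (\<exists>p\<in>set ws. \<exists>q\<in>set ws. snd p = snd q \<and> fst q - fst p = int n))"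
    unfolding diff has_chord_def by (fastforce simp: in_set_conv_nth)
  finally show ?thesis .
qed

lemma k_nd_r_nd:
  fixes n d :: int
  assumes d: "d \<ge> 1"
  shows "n = k_nd n d * d + r_nd n d" "- (d div 2) \<le> r_nd n d" "r_nd n d \<le> d - d div 2 - 1"
proof -
  have floor: "\<lfloor>real_of_int d / 2\<rfloor> = d div 2"
    using floor_divide_of_int_eq[of d 2] by simp
  have "\<lceil>real_of_int d / real_of_int 2\<rceil> = - (- d div 2)" by (rule ceiling_divide_eq_div)
  hence ceiling: "\<lceil>real_of_int d / 2\<rceil> = d - d div 2" by simp
  define P where "P p \<longleftrightarrow> n = fst p * d + snd p \<and> - (d div 2) \<le> snd p \<and> snd p \<le> d - d div 2 - 1"
    for p :: "int \<times> int"
  have "P ((n + d div 2) div d, (n + d div 2) mod d - d div 2)"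
  proof -
    have "n = (n + d div 2) div d * d + ((n + d div 2) mod d - d div 2)"
      using div_mult_mod_eq[of "n + d div 2" d] by linarith
    moreover have "0 \<le> (n + d div 2) mod d" "(n + d div 2) mod d < d" using d by auto
    ultimately show ?thesis unfolding P_def by simp
  qed
  moreover have "p = q" if "P p" "P q" for p q
  proof -
    have e: "(fst p - fst q) * d = snd q - snd p" using that unfolding P_def by (simp add: algebra_simps)
    have "\<bar>fst p - fst q\<bar> * d = \<bar>(fst p - fst q) * d\<bar>" using d by (simp add: abs_mult)
    also have "\<dots> = \<bar>snd q - snd p\<bar>" using e by simp
    also have "\<dots> < 1 * d" using that unfolding P_def by auto
    finally have "\<bar>fst p - fst q\<bar> < 1" using d by (simp only: mult_less_cancel_right)
    hence "fst p = fst q" by simp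
    thus ?thesis using e by (simp add: prod_eq_iff)
  qed
  ultimately have "P (kr_pair n d)"
    unfolding kr_pair_def floor ceiling P_def[symmetric] by (metis theI)
  thus "n = k_nd n d * d + r_nd n d" "- (d div 2) \<le> r_nd n d" "r_nd n d \<le> d - d div 2 - 1"
    unfolding P_def k_nd_def r_nd_def by auto
qed

lemma avoiding_walk_exists:
  fixes n d k r :: int
  assumes n: "n \<ge> 1" and d: "d \<ge> 1" and kr: "n = k * d + r"
    and r: "- (d div 2) \<le> r" "r \<le> d - d div 2 - 1" and small: "k \<le> \<bar>r\<bar>"
  shows "\<exists>ws h. lattice_walk ws \<and> (0, h) \<in> set ws \<and> (n, h) \<in> set ws \<and> \<not> has_chord ws d"
proof (cases "n < d")
  case True
  define ws where "ws = column_walk (\<lambda>_. 0) (nat n)"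
  have "\<not> has_chord ws d" unfolding ws_def using True n by (intro column_walk_no_chord) auto
  moreover have "(0, 0) \<in> set ws" "(n, 0) \<in> set ws" using n unfolding ws_def set_column_walk by auto
  ultimately show ?thesis using lattice_walk_column_walk unfolding ws_def by blast
next
  case False
  have "k \<ge> 1"
  proof (rule ccontr)
    assume "\<not> k \<ge> 1"
    hence "k * d \<le> 0" using d by (simp add: mult_nonpos_nonneg)
    thus False using False kr r by linarith
  qed
  show ?thesis
  proof (cases "r \<ge> 0")
    case True
    thus ?thesis using avoiding_walk_nonneg_remainder[OF \<open>k \<ge> 1\<close> _ _ kr] small r by simp
  next
    case neg: False
    have "k \<ge> 2" using \<open>k \<ge> 1\<close> False kr neg by (cases "k = 1") auto
    moreover have "n = k * d - (- r)" using kr by simp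
    ultimately show ?thesis using avoiding_walk_neg_remainder[of k "- r" d n] small neg r by simp
  qed
qed

theorem mainTheorem1:
  fixes n d :: nat
  assumes "n \<ge> 1" and "d \<ge> 1"
  shows "d \<in> A_set n \<longleftrightarrow> k_nd (int n) (int d) \<ge> \<bar>r_nd (int n) (int d)\<bar> + 1"
proof -
  define k r where "k = k_nd (int n) (int d)" and "r = r_nd (int n) (int d)"
  have d: "int d \<ge> 1" using assms by simp
  note kr = k_nd_r_nd[OF d, of "int n", folded k_def r_def]
  show ?thesis
    unfolding A_set_def mem_Collect_eq avoidable_iff_lattice_walk k_def[symmetric] r_def[symmetric]
  proof
    assume no_walk: "\<not> (\<exists>ws. lattice_walk ws \<and> \<not> has_chord ws (int d) \<and>
      (\<exists>p\<in>set ws. \<exists>q\<in>set ws. snd p = snd q \<and> fst q - fst p = int n))"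
    show "k \<ge> \<bar>r\<bar> + 1"
    proof (rule ccontr)
      assume "\<not> k \<ge> \<bar>r\<bar> + 1"
      then obtain ws h where "lattice_walk ws" "(0, h) \<in> set ws" "(int n, h) \<in> set ws" "\<not> has_chord ws d"
        using avoiding_walk_exists[OF _ d kr] assms by auto
      thus False using no_walk by fastforce
    qed
  next
    assume "k \<ge> \<bar>r\<bar> + 1"
    hence "forcing_length (int d) (int n)" using kr by (intro forcing_lengthI[of k]) auto
    thus "\<not> (\<exists>ws. lattice_walk ws \<and> \<not> has_chord ws (int d) \<and>
      (\<exists>p\<in>set ws. \<exists>q\<in>set ws. snd p = snd q \<and> fst q - fst p = int n))"
      using has_chord_of_forcing_length[OF _ d] by metis
  qed
qed

end
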